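(* Let $m\ge 2$, let $\mathcal{A}\in\mathbb{C}^{n_1\times\cdots\times n_m}$ be a nonzero complex tensor, and let $\mathcal{B}\in\mathbb{R}^{2n_1\times\cdots\times 2n_m}$ be the real tensor such that for all $x^{(i)},y^{(i)}\in\mathbb{R}^{n_i}$, writing $u^{(i)}=(x^{(i)},y^{(i)})\in\mathbb{R}^{2n_i}$, $$\langle\mathcal{B},\otimes_{i=1}^m u^{(i)}\rangle=\mathrm{Re}\,\big\langle\mathcal{A},\otimes_{i=1}^m (x^{(i)}+\sqrt{-1}\,y^{(i)})\big\rangle .$$ Suppose $(\hat u^{(1)},\dots,\hat u^{(m-1)})$, $\hat u^{(i)}\in\mathbb{R}^{2n_i}$, is a maximizer of $$\max\ \big\|\langle\mathcal{B},u^{(1)}\otimes\cdots\otimes u^{(m-1)}\rangle\big\|\quad\text{s.t. } u^{(i)}\in\mathbb{R}^{2n_i},\ \|u^{(i)}\|=1,\ i=1,\dots,m-1,$$ and let $\lambda$ be its maximal value. Define $\hat u^{(m)}=\langle\mathcal{B},\hat u^{(1)}\otimes\cdots\otimes\hat u^{(m-1)}\rangle/\lambda\in\mathbb{R}^{2n_m}$, write $\hat u^{(i)}=(\hat x^{(i)},\hat y^{(i)})$ with $\hat x^{(i)},\hat y^{(i)}\in\mathbb{R}^{n_i}$, and set $\hat z^{(i)}=\hat x^{(i)}+\sqrt{-1}\,\hat y^{(i)}$ for $i=1,\dots,m$. Then $\lambda$ is the largest U-eigenvalue of $\mathcal{A}$ and $(\hat z^{(1)},\dots,\hat z^{(m)})$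 is a tuple of U-eigenvectors associated with $\lambda$.
   Context: For complex tensors, $\langle\mathcal{A},\mathcal{C}\rangle=\sum_{i_1,\dots,i_m}\overline{\mathcal{A}_{i_1\cdots i_m}}\,\mathcal{C}_{i_1\cdots i_m}$, and $\otimes_{i=1}^m z^{(i)}$ is the rank-one tensor with entries $z^{(1)}_{i_1}\cdots z^{(m)}_{i_m}$. For the real tensor $\mathcal{B}$, $\langle\mathcal{B},u^{(1)}\otimes\cdots\otimes u^{(m-1)}\rangle$ denotes the vector in $\mathbb{R}^{2n_m}$ with $j$-th component $\sum_{i_1,\dots,i_{m-1}}\mathcal{B}_{i_1\cdots i_{m-1}j}\,u^{(1)}_{i_1}\cdots u^{(m-1)}_{i_{m-1}}$. For $k\in\{1,\dots,m\}$, $\langle \mathcal{A},\otimes_{i=1,i\ne k}^m z^{(i)}\rangle$ denotes the vector in $\mathbb{C}^{n_k}$ whose $i_k$-th component is $\sum_{i_j,\, j\neq k} \overline{\mathcal{A}_{i_1\cdots i_m}}\, \prod_{j\ne k} z^{(j)}_{i_j}$. A real number $\lambda$ is a U-eigenvalue of $\mathcal{A}$, with U-eigenvector tuple $(x^{(1)},\dots,x^{(m)})$, if $x^{(i)}\in\mathbb{C}^{n_i}$, $\|x^{(i)}\|=1$ for all $i$, and $\langle \mathcal{A},\otimes_{i=1,i\ne k}^m x^{(i)}\rangle=\lambda\, \overline{x^{(k)}}$ for every $k=1,\dots,m$ (entrywise complex conjugate on the right). All norms on vectors are Euclidean. *)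

theory Defs
  imports "HOL-Analysis.Analysis"
begin

text \<open>An order-m tensor with mode sizes n 0, ..., n (m-1) is a function on index
tuples; index tuples are extensional functions in PiE {..<m} (\<lambda>k. {..<n k}).
A vector in C^(n_i) is a function nat => complex, only entries j < n_i matter.
Modes are numbered 0..m-1 (the paper's 1..m).\<close>

definition idx_set :: "nat \<Rightarrow> (nat \<Rightarrow> nat) \<Rightarrow> (nat \<Rightarrow> nat) set" where
  "idx_set m n = PiE {..<m} (\<lambda>k. {..<n k})"

definition cinner :: "nat \<Rightarrow> (nat \<Rightarrow> nat) \<Rightarrow> ((nat \<Rightarrow> nat) \<Rightarrow> complex)
    \<Rightarrow> (nat \<Rightarrow> nat \<Rightarrow> complex) \<Rightarrow> complex" where
  "cinner m n A z = (\<Sum>\<iota>\<in>idx_set m n. cnj (A \<iota>) * (\<Prod>k<m. z k (\<iota> k)))"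

definition ccontr :: "nat \<Rightarrow> (nat \<Rightarrow> nat) \<Rightarrow> ((nat \<Rightarrow> nat) \<Rightarrow> complex)
    \<Rightarrow> nat \<Rightarrow> (nat \<Rightarrow> nat \<Rightarrow> complex) \<Rightarrow> nat \<Rightarrow> complex" where
  "ccontr m n A k z j = (\<Sum>\<iota>\<in>{\<iota>\<in>idx_set m n. \<iota> k = j}.
      cnj (A \<iota>) * (\<Prod>l\<in>{..<m} - {k}. z l (\<iota> l)))"

definition rinner :: "nat \<Rightarrow> (nat \<Rightarrow> nat) \<Rightarrow> ((nat \<Rightarrow> nat) \<Rightarrow> real)
    \<Rightarrow> (nat \<Rightarrow> nat \<Rightarrow> real) \<Rightarrow> real" where
  "rinner m n B u = (\<Sum>\<iota>\<in>idx_set m n. B \<iota> * (\<Prod>k<m. u k (\<iota> k)))"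

definition rcontr_last :: "nat \<Rightarrow> (nat \<Rightarrow> nat) \<Rightarrow> ((nat \<Rightarrow> nat) \<Rightarrow> real)
    \<Rightarrow> (nat \<Rightarrow> nat \<Rightarrow> real) \<Rightarrow> nat \<Rightarrow> real" where
  "rcontr_last m n B u j = (\<Sum>\<iota>\<in>{\<iota>\<in>idx_set m n. \<iota> (m - 1) = j}.
      B \<iota> * (\<Prod>l<m - 1. u l (\<iota> l)))"

definition cvnorm :: "nat \<Rightarrow> (nat \<Rightarrow> complex) \<Rightarrow> real" where
  "cvnorm d v = sqrt (\<Sum>j<d. (cmod (v j))\<^sup>2)"

definition rvnorm :: "nat \<Rightarrow> (nat \<Rightarrow> real) \<Rightarrow> real" where
  "rvnorm d v = sqrt (\<Sum>j<d. (v j)\<^sup>2)"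

text \<open>u = (x, y) in R^(2d), entries 0..d-1 are x, entries d..2d-1 are y; gives x + i y.\<close>
definition to_cvec :: "nat \<Rightarrow> (nat \<Rightarrow> real) \<Rightarrow> nat \<Rightarrow> complex" where
  "to_cvec d u = (\<lambda>j. Complex (u j) (u (d + j)))"

definition U_eigenpair :: "nat \<Rightarrow> (nat \<Rightarrow> nat) \<Rightarrow> ((nat \<Rightarrow> nat) \<Rightarrow> complex)
    \<Rightarrow> real \<Rightarrow> (nat \<Rightarrow> nat \<Rightarrow> complex) \<Rightarrow> bool" where
  "U_eigenpair m n A lam x \<longleftrightarrow>
     (\<forall>i<m. cvnorm (n i) (x i) = 1) \<and>
     (\<forall>k<m. \<forall>j<n k. ccontr m n A k x j = complex_of_real lam * cnj (x k j))"

definition U_eigenvalue :: "nat \<Rightarrow> (nat \<Rightarrow> nat) \<Rightarrow> ((nat \<Rightarrow> nat) \<Rightarrow> complex)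
    \<Rightarrow> real \<Rightarrow> bool" where
  "U_eigenvalue m n A lam \<longleftrightarrow> (\<exists>x. U_eigenpair m n A lam x)"

end

theory Submission
  imports Defs
begin

text \<open>Identify \<open>z = x + \<i> y\<close> with \<open>u = (x, y)\<close> in every mode; norms agree, and
\<open>F u = \<langle>B, u\<^sup>1 \<otimes> \<dots> \<otimes> u\<^sup>m\<rangle> = Re \<langle>A, z\<^sup>1 \<otimes> \<dots> \<otimes> z\<^sup>m\<rangle>\<close>. By Cauchy-Schwarz in the last mode,
\<open>\<lambda>\<close> bounds \<open>F\<close> on unit tuples, and \<open>F\<close> attains \<open>\<lambda>\<close> at the completed maximiser
\<open>(u\<^sup>1, \<dots>, u\<^sup>m)\<close>. As \<open>F\<close> is linear in each mode, a maximiser over the unit sphere of mode \<open>k\<close>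
is parallel to the partial contraction in mode \<open>k\<close>; read in complex coordinates this is the
U-eigen-equation. Conversely, contracting the eigen-equation of any U-eigenpair \<open>(\<mu>, x)\<close>
with \<open>x\<^sup>1\<close> gives \<open>\<langle>A, x\<^sup>1 \<otimes> \<dots> \<otimes> x\<^sup>m\<rangle> = \<mu>\<close>, hence \<open>\<mu> \<le> \<lambda>\<close>. Finally \<open>\<lambda> > 0\<close>, since a nonzero
entry of \<open>A\<close> yields a unit tuple of standard basis vectors on which \<open>F\<close> is positive.\<close>

lemma sum_mult_le_rvnorm_mult: "(\<Sum>j<d. a j * b j) \<le> rvnorm d a * rvnorm d b"
proof -
  have "(\<Sum>j<d. a j * b j) \<le> sqrt ((\<Sum>j<d. a j * b j)\<^sup>2)" by simp
  also have "\<dots> \<le> sqrt ((\<Sum>j<d. (a j)\<^sup>2) * (\<Sum>j<d. (b j)\<^sup>2))"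
    by (rule real_sqrt_le_mono) (rule Cauchy_Schwarz_ineq_sum)
  also have "\<dots> = rvnorm d a * rvnorm d b" by (simp add: rvnorm_def real_sqrt_mult)
  finally show ?thesis .
qed

lemma rvnorm_eq_1_iff: "rvnorm d v = 1 \<longleftrightarrow> (\<Sum>j<d. (v j)\<^sup>2) = 1"
  by (simp add: rvnorm_def)

lemma eq_scaled_of_unit_maximizer:
  fixes g w :: "nat \<Rightarrow> real"
  assumes lam_pos: "lam > 0" and w_unit: "rvnorm d w = 1"
    and attained: "(\<Sum>j<d. g j * w j) = lam"
    and bound: "\<And>v. rvnorm d v = 1 \<Longrightarrow> (\<Sum>j<d. g j * v j) \<le> lam"
  shows "\<forall>j<d. g j = lam * w j"
proof -
  define s where "s = (\<Sum>j<d. (g j)\<^sup>2)"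
  have s_nonneg: "s \<ge> 0" unfolding s_def by (simp add: sum_nonneg)
  have w_sq: "(\<Sum>j<d. (w j)\<^sup>2) = 1" using w_unit by (simp add: rvnorm_eq_1_iff)
  have s_le: "s \<le> lam\<^sup>2"
  proof (cases "s = 0")
    case False
    then have s_pos: "s > 0" using s_nonneg by simp
    define v where "v = (\<lambda>j. g j / sqrt s)"
    have "(\<Sum>j<d. (v j)\<^sup>2) = s / s" unfolding v_def s_def
      by (simp add: power_divide sum_divide_distrib[symmetric] s_def[symmetric] s_nonneg)
    then have "(\<Sum>j<d. g j * v j) \<le> lam"
      using s_pos by (intro bound) (simp add: rvnorm_eq_1_iff)
    moreover have "(\<Sum>j<d. g j * v j) = s / sqrt s" unfolding v_def s_def
      by (simp add: sum_divide_distrib[symmetric] power2_eq_square)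
    moreover have "s / sqrt s = sqrt s" using s_pos by (metis real_div_sqrt less_imp_le)
    ultimately show ?thesis using s_nonneg lam_pos
      by (metis real_sqrt_le_iff real_sqrt_pow2 sqrt_le_D)
  qed simp
  have "(\<Sum>j<d. (g j - lam * w j)\<^sup>2)
      = s - 2 * lam * (\<Sum>j<d. g j * w j) + lam\<^sup>2 * (\<Sum>j<d. (w j)\<^sup>2)"
    unfolding s_def by (simp add: power2_diff sum.distrib sum_subtractf sum_distrib_left
        power_mult_distrib algebra_simps)
  also have "\<dots> \<le> 0" using s_le attained w_sq by (simp add: power2_eq_square)
  finally have "(\<Sum>j<d. (g j - lam * w j)\<^sup>2) = 0"
    by (meson order_antisym sum_nonneg zero_le_power2)
  then have "\<forall>j\<in>{..<d}. (g j - lam * w j)\<^sup>2 = 0"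
    by (subst sum_nonneg_eq_0_iff[symmetric]) auto
  then show ?thesis by auto
qed

lemma sum_mult_indicator:
  fixes c :: "'a::comm_ring_1" and d :: nat
  assumes "i < d"
  shows "(\<Sum>j<d. f j * (if j = i then c else 0)) = f i * c"
proof -
  have "(\<Sum>j<d. f j * (if j = i then c else 0)) = (\<Sum>j<d. if j = i then f i * c else 0)"
    by (intro sum.cong) auto
  also have "\<dots> = f i * c" using assms by (subst sum.delta) auto
  finally show ?thesis .
qed

lemma sum_PiE_split_mode:
  fixes T :: "(nat \<Rightarrow> nat) \<Rightarrow> 'a::comm_ring_1"
  assumes k: "k < m" and fin: "\<And>i. finite (S i)"
  shows "(\<Sum>\<iota>\<in>PiE {..<m} S. T \<iota> * (\<Prod>l<m. u l (\<iota> l)))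
    = (\<Sum>j\<in>S k. (\<Sum>\<iota>\<in>{\<iota>\<in>PiE {..<m} S. \<iota> k = j}. T \<iota> * (\<Prod>l\<in>{..<m}-{k}. u l (\<iota> l))) * u k j)"
proof -
  have img: "(\<lambda>\<iota>. \<iota> k) ` PiE {..<m} S \<subseteq> S k" using k by (auto simp: PiE_iff)
  have prod_split: "(\<Prod>l<m. u l (\<iota> l)) = (\<Prod>l\<in>{..<m}-{k}. u l (\<iota> l)) * u k (\<iota> k)" for \<iota>
    using k by (simp add: prod.remove[of "{..<m}" k] mult.commute)
  have "(\<Sum>\<iota>\<in>PiE {..<m} S. T \<iota> * (\<Prod>l<m. u l (\<iota> l)))
      = (\<Sum>j\<in>S k. (\<Sum>\<iota>\<in>{\<iota>\<in>PiE {..<m} S. \<iota> k = j}. T \<iota> * (\<Prod>l<m. u l (\<iota> l))))"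
    by (rule sum.group[OF _ fin img, symmetric]) (simp add: fin finite_PiE)
  also have "\<dots> = (\<Sum>j\<in>S k. (\<Sum>\<iota>\<in>{\<iota>\<in>PiE {..<m} S. \<iota> k = j}.
                     T \<iota> * (\<Prod>l\<in>{..<m}-{k}. u l (\<iota> l))) * u k j)"
    unfolding sum_distrib_right by (intro sum.cong refl) (simp add: prod_split mult.assoc)
  finally show ?thesis .
qed

definition rcontr :: "nat \<Rightarrow> (nat \<Rightarrow> nat) \<Rightarrow> ((nat \<Rightarrow> nat) \<Rightarrow> real) \<Rightarrow> nat
    \<Rightarrow> (nat \<Rightarrow> nat \<Rightarrow> real) \<Rightarrow> nat \<Rightarrow> real" where
  "rcontr m N B k u j = (\<Sum>\<iota>\<in>{\<iota>\<in>idx_set m N. \<iota> k = j}. B \<iota> * (\<Prod>l\<in>{..<m}-{k}. u l (\<iota> l)))"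

lemma rinner_split_mode: "k < m \<Longrightarrow> rinner m N B u = (\<Sum>j<N k. rcontr m N B k u j * u k j)"
  unfolding rinner_def rcontr_def idx_set_def by (rule sum_PiE_split_mode) auto

lemma cinner_split_mode: "k < m \<Longrightarrow> cinner m n A z = (\<Sum>j<n k. ccontr m n A k z j * z k j)"
  unfolding cinner_def ccontr_def idx_set_def by (rule sum_PiE_split_mode) auto

lemma rcontr_fun_upd [simp]: "rcontr m N B k (u(k := v)) = rcontr m N B k u"
  unfolding rcontr_def by (intro ext sum.cong refl arg_cong2[where f="(*)"] prod.cong) auto

lemma ccontr_fun_upd [simp]: "ccontr m n A k (z(k := w)) = ccontr m n A k z"
  unfolding ccontr_def by (intro ext sum.cong refl arg_cong2[where f="(*)"] prod.cong) auto

lemma rcontr_last_eq_rcontr: "1 \<le> m \<Longrightarrow> rcontr_last m N B u = rcontr m N B (m - 1) u"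
proof -
  assume "1 \<le> m"
  then have "{..<m} - {m - 1} = {..<m - 1}" by auto
  then show ?thesis unfolding rcontr_last_def rcontr_def by (simp add: fun_eq_iff)
qed

lemma rinner_le_of_rcontr_last_bound:
  assumes m: "1 \<le> m"
    and bound: "\<forall>u. (\<forall>i<m - 1. rvnorm (N i) (u i) = 1) \<longrightarrow>
                  rvnorm (N (m - 1)) (rcontr_last m N B u) \<le> lam"
    and v_unit: "\<forall>l<m. rvnorm (N l) (v l) = 1"
  shows "rinner m N B v \<le> lam"
proof -
  have "rinner m N B v = (\<Sum>j<N (m - 1). rcontr_last m N B v j * v (m - 1) j)"
    using m by (simp add: rinner_split_mode[of "m - 1"] rcontr_last_eq_rcontr)
  also have "\<dots> \<le> rvnorm (N (m - 1)) (rcontr_last m N B v) * rvnorm (N (m - 1)) (v (m - 1))"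
    by (rule sum_mult_le_rvnorm_mult)
  also have "\<dots> \<le> lam" using m bound v_unit by simp
  finally show ?thesis .
qed

lemma rinner_complete_last:
  fixes m :: nat and N :: "nat \<Rightarrow> nat" and B :: "(nat \<Rightarrow> nat) \<Rightarrow> real"
    and u :: "nat \<Rightarrow> nat \<Rightarrow> real"
  defines "g \<equiv> rcontr_last m N B u"
  assumes m: "1 \<le> m" and lam: "lam = rvnorm (N (m - 1)) g" "lam > 0"
  shows "rvnorm (N (m - 1)) (\<lambda>j. g j / lam) = 1"
    and "rinner m N B (u(m - 1 := (\<lambda>j. g j / lam))) = lam"
proof -
  have g_sq: "(\<Sum>j<N (m - 1). (g j)\<^sup>2) = lam\<^sup>2"
    using lam unfolding rvnorm_def by (simp add: sum_nonneg)
  have "(\<Sum>j<N (m - 1). (g j / lam)\<^sup>2) = lam\<^sup>2 / lam\<^sup>2"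
    unfolding power_divide sum_divide_distrib[symmetric] g_sq ..
  then show "rvnorm (N (m - 1)) (\<lambda>j. g j / lam) = 1"
    using lam by (simp add: rvnorm_eq_1_iff)
  have "rinner m N B (u(m - 1 := (\<lambda>j. g j / lam))) = (\<Sum>j<N (m - 1). g j * (g j / lam))"
    using m by (simp add: rinner_split_mode[of "m - 1"] g_def rcontr_last_eq_rcontr)
  also have "\<dots> = lam\<^sup>2 / lam"
    by (simp only: times_divide_eq_right power2_eq_square[symmetric]
        sum_divide_distrib[symmetric] g_sq)
  also have "\<dots> = lam" using lam by (simp add: power2_eq_square)
  finally show "rinner m N B (u(m - 1 := (\<lambda>j. g j / lam))) = lam" .
qed

lemma rcontr_eq_of_rinner_maximizer:
  assumes lam_pos: "lam > 0" and k: "k < m"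
    and u_unit: "\<forall>l<m. rvnorm (N l) (u l) = 1" and attained: "rinner m N B u = lam"
    and bound: "\<And>v. \<forall>l<m. rvnorm (N l) (v l) = 1 \<Longrightarrow> rinner m N B v \<le> lam"
  shows "\<forall>j<N k. rcontr m N B k u j = lam * u k j"
proof (rule eq_scaled_of_unit_maximizer[OF lam_pos])
  have upd: "rinner m N B (u(k := w)) = (\<Sum>j<N k. rcontr m N B k u j * w j)" for w
    by (simp add: rinner_split_mode[OF k])
  show "rvnorm (N k) (u k) = 1" using u_unit k by simp
  show "(\<Sum>j<N k. rcontr m N B k u j * u k j) = lam"
    using upd[of "u k"] attained by simp
  fix w assume "rvnorm (N k) w = 1"
  then have "rinner m N B (u(k := w)) \<le> lam" using u_unit by (intro bound) auto
  then show "(\<Sum>j<N k. rcontr m N B k u j * w j) \<le> lam" by (simp only: upd)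
qed

lemma cvnorm_to_cvec: "cvnorm d (to_cvec d u) = rvnorm (2 * d) u"
proof -
  have "(\<Sum>j<2 * d. (u j)\<^sup>2) = (\<Sum>j<d. (u j)\<^sup>2) + (\<Sum>j\<in>{d..<d + d}. (u j)\<^sup>2)"
    by (simp add: mult_2 lessThan_atLeast0 sum.atLeastLessThan_concat)
  also have "(\<Sum>j\<in>{d..<d + d}. (u j)\<^sup>2) = (\<Sum>j<d. (u (d + j))\<^sup>2)"
    using sum.shift_bounds_nat_ivl[of "\<lambda>j. (u j)\<^sup>2" 0 d d]
    by (simp add: lessThan_atLeast0 add.commute)
  finally show ?thesis
    by (simp add: cvnorm_def rvnorm_def to_cvec_def complex_norm sum.distrib)
qed

definition real_coords :: "nat \<Rightarrow> (nat \<Rightarrow> complex) \<Rightarrow> nat \<Rightarrow> real" where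
  "real_coords d z j = (if j < d then Re (z j) else Im (z (j - d)))"

lemma to_cvec_real_coords: "j < d \<Longrightarrow> to_cvec d (real_coords d z) j = z j"
  by (simp add: to_cvec_def real_coords_def complex_eq_iff)

lemma rvnorm_real_coords: "rvnorm (2 * d) (real_coords d z) = cvnorm d z"
  by (simp add: cvnorm_to_cvec[symmetric] cvnorm_def to_cvec_real_coords)

lemma cinner_to_cvec_real_coords:
  "cinner m n A (\<lambda>i. to_cvec (n i) (real_coords (n i) (z i))) = cinner m n A z"
  unfolding cinner_def idx_set_def
  by (intro sum.cong refl arg_cong2[where f="(*)"] prod.cong)
     (auto simp: to_cvec_real_coords PiE_iff)

text \<open>Vary mode \<open>k\<close> in the defining identity of \<open>B\<close> and test it on the basis vectors
\<open>e\<^sub>j\<close> and \<open>e\<^sub>n\<^sub>+\<^sub>j\<close> of \<open>\<real>\<^sup>2\<^sup>n\<close>, which correspond to \<open>e\<^sub>j\<close> and \<open>\<i> e\<^sub>j\<close> in \<open>\<complex>\<^sup>n\<close>.\<close>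
lemma ccontr_to_cvec_eq_rcontr:
  assumes B_def: "\<forall>u. rinner m (\<lambda>i. 2 * n i) B u = Re (cinner m n A (\<lambda>i. to_cvec (n i) (u i)))"
    and k: "k < m" and j: "j < n k"
  shows "ccontr m n A k (\<lambda>i. to_cvec (n i) (u i)) j
       = Complex (rcontr m (\<lambda>i. 2 * n i) B k u j) (- rcontr m (\<lambda>i. 2 * n i) B k u (n k + j))"
proof -
  define z where "z = (\<lambda>i. to_cvec (n i) (u i))"
  define c where "c = ccontr m n A k z"
  define g where "g = rcontr m (\<lambda>i. 2 * n i) B k u"
  have pairing: "(\<Sum>i<2 * n k. g i * w i) = Re (\<Sum>i<n k. c i * to_cvec (n k) w i)" for w
  proof -
    have "(\<lambda>i. to_cvec (n i) ((u(k := w)) i)) = z(k := to_cvec (n k) w)"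
      by (auto simp: z_def)
    then have "rinner m (\<lambda>i. 2 * n i) B (u(k := w)) = Re (cinner m n A (z(k := to_cvec (n k) w)))"
      using B_def by metis
    then show ?thesis by (simp add: rinner_split_mode[OF k] cinner_split_mode[OF k] g_def c_def)
  qed
  have unit_j: "to_cvec (n k) (\<lambda>i. if i = j then 1 else 0) i = (if i = j then 1 else 0)"
    and unit_nj: "to_cvec (n k) (\<lambda>i. if i = n k + j then 1 else 0) i = (if i = j then \<i> else 0)"
    if "i < n k" for i
    using j that by (simp_all add: to_cvec_def complex_eq_iff)
  have "(\<Sum>i<n k. c i * to_cvec (n k) (\<lambda>i. if i = j then 1 else 0) i)
      = (\<Sum>i<n k. c i * (if i = j then 1 else 0))"
    by (intro sum.cong refl) (simp add: unit_j)
  also have "\<dots> = c j" using j by (simp add: sum_mult_indicator)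
  finally have "(\<Sum>i<n k. c i * to_cvec (n k) (\<lambda>i. if i = j then 1 else 0) i) = c j" .
  then have re: "g j = Re (c j)"
    using pairing[of "\<lambda>i. if i = j then 1 else 0"] j by (simp add: sum_mult_indicator)
  have "(\<Sum>i<n k. c i * to_cvec (n k) (\<lambda>i. if i = n k + j then 1 else 0) i)
      = (\<Sum>i<n k. c i * (if i = j then \<i> else 0))"
    by (intro sum.cong refl) (simp add: unit_nj)
  also have "\<dots> = c j * \<i>" using j by (simp add: sum_mult_indicator)
  finally have "(\<Sum>i<n k. c i * to_cvec (n k) (\<lambda>i. if i = n k + j then 1 else 0) i) = c j * \<i>" .
  then have im: "g (n k + j) = - Im (c j)"
    using pairing[of "\<lambda>i. if i = n k + j then 1 else 0"] j by (simp add: sum_mult_indicator)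
  show ?thesis using re im by (simp add: complex_eq_iff z_def c_def g_def)
qed

lemma U_eigenpair_of_rinner_maximizer:
  assumes B_def: "\<forall>u. rinner m (\<lambda>i. 2 * n i) B u = Re (cinner m n A (\<lambda>i. to_cvec (n i) (u i)))"
    and lam_pos: "lam > 0"
    and u_unit: "\<forall>l<m. rvnorm (2 * n l) (u l) = 1"
    and attained: "rinner m (\<lambda>i. 2 * n i) B u = lam"
    and bound: "\<And>v. \<forall>l<m. rvnorm (2 * n l) (v l) = 1 \<Longrightarrow> rinner m (\<lambda>i. 2 * n i) B v \<le> lam"
  shows "U_eigenpair m n A lam (\<lambda>i. to_cvec (n i) (u i))"
  unfolding U_eigenpair_def
proof (intro conjI allI impI)
  show "cvnorm (n i) (to_cvec (n i) (u i)) = 1" if "i < m" for i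
    using u_unit that by (simp add: cvnorm_to_cvec)
  fix k j assume k: "k < m" and j: "j < n k"
  have "\<forall>j<2 * n k. rcontr m (\<lambda>i. 2 * n i) B k u j = lam * u k j"
    using rcontr_eq_of_rinner_maximizer[OF lam_pos k u_unit attained bound] by simp
  with j show "ccontr m n A k (\<lambda>i. to_cvec (n i) (u i)) j
      = complex_of_real lam * cnj (to_cvec (n k) (u k) j)"
    by (simp only: ccontr_to_cvec_eq_rcontr[OF B_def k j]) (simp add: to_cvec_def complex_eq_iff)
qed

lemma Re_cinner_le_of_rinner_bound:
  assumes B_def: "\<forall>u. rinner m (\<lambda>i. 2 * n i) B u = Re (cinner m n A (\<lambda>i. to_cvec (n i) (u i)))"
    and bound: "\<And>v. \<forall>l<m. rvnorm (2 * n l) (v l) = 1 \<Longrightarrow> rinner m (\<lambda>i. 2 * n i) B v \<le> lam"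
    and z_unit: "\<forall>l<m. cvnorm (n l) (z l) = 1"
  shows "Re (cinner m n A z) \<le> lam"
proof -
  have "Re (cinner m n A z) = rinner m (\<lambda>i. 2 * n i) B (\<lambda>i. real_coords (n i) (z i))"
    using B_def by (simp add: cinner_to_cvec_real_coords)
  also have "\<dots> \<le> lam" using z_unit by (intro bound) (simp add: rvnorm_real_coords)
  finally show ?thesis .
qed

lemma cinner_U_eigenpair:
  assumes x: "U_eigenpair m n A \<mu> x" and m: "0 < m"
  shows "cinner m n A x = complex_of_real \<mu>"
proof -
  have "cinner m n A x = (\<Sum>j<n 0. ccontr m n A 0 x j * x 0 j)" by (rule cinner_split_mode[OF m])
  also have "\<dots> = (\<Sum>j<n 0. complex_of_real \<mu> * complex_of_real ((cmod (x 0 j))\<^sup>2))"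
    using x m unfolding U_eigenpair_def
    by (intro sum.cong refl) (simp add: complex_norm_square[symmetric] mult.commute)
  also have "\<dots> = complex_of_real (\<mu> * (\<Sum>j<n 0. (cmod (x 0 j))\<^sup>2))"
    by (simp add: sum_distrib_left)
  also have "(\<Sum>j<n 0. (cmod (x 0 j))\<^sup>2) = 1"
    using x m unfolding U_eigenpair_def cvnorm_def by (metis real_sqrt_eq_1_iff)
  finally show ?thesis by simp
qed

lemma U_eigenvalue_le_of_Re_cinner_bound:
  assumes m: "0 < m" and ev: "U_eigenvalue m n A \<mu>"
    and bound: "\<And>z. \<forall>l<m. cvnorm (n l) (z l) = 1 \<Longrightarrow> Re (cinner m n A z) \<le> lam"
  shows "\<mu> \<le> lam"
proof -
  obtain x where x: "U_eigenpair m n A \<mu> x" using ev by (auto simp: U_eigenvalue_def)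
  then have "Re (cinner m n A x) \<le> lam" by (intro bound) (simp add: U_eigenpair_def)
  then show ?thesis by (simp add: cinner_U_eigenpair[OF x m])
qed

lemma cinner_basis_tuple:
  assumes \<iota>0: "\<iota>0 \<in> idx_set m n" and m: "0 < m"
  shows "cinner m n A (\<lambda>l j. if j = \<iota>0 l then if l = 0 then c else 1 else 0) = cnj (A \<iota>0) * c"
proof -
  define z :: "nat \<Rightarrow> nat \<Rightarrow> complex"
    where "z = (\<lambda>l j. if j = \<iota>0 l then if l = 0 then c else 1 else 0)"
  have vanish: "cnj (A \<iota>) * (\<Prod>l<m. z l (\<iota> l)) = 0" if "\<iota> \<in> idx_set m n - {\<iota>0}" for \<iota>
  proof -
    have "\<iota> \<in> PiE {..<m} (\<lambda>k. {..<n k})" "\<iota> \<noteq> \<iota>0" "\<iota>0 \<in> PiE {..<m} (\<lambda>k. {..<n k})"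
      using that \<iota>0 by (auto simp: idx_set_def)
    then obtain l where "l < m" "\<iota> l \<noteq> \<iota>0 l" by (metis PiE_ext lessThan_iff)
    then have "(\<Prod>l<m. z l (\<iota> l)) = 0"
      by (intro prod_zero) (auto simp: z_def intro!: bexI[of _ l])
    then show ?thesis by simp
  qed
  have fin: "finite (idx_set m n)" by (simp add: idx_set_def finite_PiE)
  have "(\<Sum>\<iota>\<in>idx_set m n - {\<iota>0}. cnj (A \<iota>) * (\<Prod>l<m. z l (\<iota> l))) = 0"
    using vanish by (intro sum.neutral) blast
  then have "cinner m n A z = cnj (A \<iota>0) * (\<Prod>l<m. z l (\<iota>0 l))"
    unfolding cinner_def
    using sum.remove[OF fin \<iota>0, of "\<lambda>\<iota>. cnj (A \<iota>) * (\<Prod>l<m. z l (\<iota> l))"] by simp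
  also have "(\<Prod>l<m. z l (\<iota>0 l)) = (\<Prod>l<m. if l = 0 then c else 1)"
    by (intro prod.cong) (auto simp: z_def)
  also have "\<dots> = c" using m by (simp add: prod.If_cases)
  finally show ?thesis by (simp add: z_def)
qed

lemma exists_unit_Re_cinner_pos:
  assumes "\<iota>0 \<in> idx_set m n" and nz: "A \<iota>0 \<noteq> 0" and m: "0 < m"
  shows "\<exists>z. (\<forall>l<m. cvnorm (n l) (z l) = 1) \<and> Re (cinner m n A z) > 0"
proof (intro exI conjI)
  define c where "c = A \<iota>0 / complex_of_real (cmod (A \<iota>0))"
  let ?z = "\<lambda>l j. if j = \<iota>0 l then if l = 0 then c else 1 else 0"
  have c_unit: "cmod c = 1" using nz by (simp add: c_def norm_divide)
  show "\<forall>l<m. cvnorm (n l) (?z l) = 1"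
  proof (intro allI impI)
    fix l assume "l < m"
    then have "\<iota>0 l < n l" using assms(1) by (auto simp: idx_set_def PiE_iff)
    then have "(\<Sum>j<n l. (cmod (?z l j))\<^sup>2) = 1"
      by (simp add: c_unit if_distrib[of cmod] if_distrib[of "\<lambda>x. x\<^sup>2"] cong: if_cong)
    then show "cvnorm (n l) (?z l) = 1" by (simp add: cvnorm_def)
  qed
  have "cnj (A \<iota>0) * c = A \<iota>0 * cnj (A \<iota>0) / complex_of_real (cmod (A \<iota>0))"
    by (simp add: c_def mult.commute)
  also have "\<dots> = (complex_of_real (cmod (A \<iota>0)))\<^sup>2 / complex_of_real (cmod (A \<iota>0))"
    by (simp only: complex_norm_square[symmetric] of_real_power)
  also have "\<dots> = complex_of_real (cmod (A \<iota>0))" using nz by (simp add: power2_eq_square)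
  finally show "Re (cinner m n A ?z) > 0" using nz by (simp add: cinner_basis_tuple[OF assms(1) m])
qed

theorem theorem3p2:
  fixes m :: nat and n :: "nat \<Rightarrow> nat"
    and A :: "(nat \<Rightarrow> nat) \<Rightarrow> complex" and B :: "(nat \<Rightarrow> nat) \<Rightarrow> real"
    and uhat :: "nat \<Rightarrow> nat \<Rightarrow> real" and lam :: real
  assumes m2: "m \<ge> 2"
    and A_nz: "\<exists>\<iota>\<in>idx_set m n. A \<iota> \<noteq> 0"
    and B_def: "\<forall>u. rinner m (\<lambda>i. 2 * n i) B u
                    = Re (cinner m n A (\<lambda>i. to_cvec (n i) (u i)))"
    and feas: "\<forall>i<m - 1. rvnorm (2 * n i) (uhat i) = 1"
    and maxim: "\<forall>u. (\<forall>i<m - 1. rvnorm (2 * n i) (u i) = 1) \<longrightarrow>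
         rvnorm (2 * n (m - 1)) (rcontr_last m (\<lambda>i. 2 * n i) B u)
           \<le> rvnorm (2 * n (m - 1)) (rcontr_last m (\<lambda>i. 2 * n i) B uhat)"
    and lam_def: "lam = rvnorm (2 * n (m - 1)) (rcontr_last m (\<lambda>i. 2 * n i) B uhat)"
  shows "let um = (\<lambda>j. rcontr_last m (\<lambda>i. 2 * n i) B uhat j / lam);
             zhat = (\<lambda>i. to_cvec (n i) (if i = m - 1 then um else uhat i))
         in U_eigenvalue m n A lam \<and> (\<forall>\<mu>. U_eigenvalue m n A \<mu> \<longrightarrow> \<mu> \<le> lam)
            \<and> U_eigenpair m n A lam zhat"
proof -
  have m: "1 \<le> m" "0 < m" using m2 by auto
  have bound: "rinner m (\<lambda>i. 2 * n i) B v \<le> lam"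
    if "\<forall>l<m. rvnorm (2 * n l) (v l) = 1" for v
    using rinner_le_of_rcontr_last_bound[OF m(1) maxim[folded lam_def] that] .
  have Re_bound: "Re (cinner m n A z) \<le> lam" if "\<forall>l<m. cvnorm (n l) (z l) = 1" for z
    using Re_cinner_le_of_rinner_bound[OF B_def bound that] .
  have lam_pos: "lam > 0"
    using A_nz exists_unit_Re_cinner_pos[OF _ _ m(2)] Re_bound by (meson less_le_trans)
  define um where "um = (\<lambda>j. rcontr_last m (\<lambda>i. 2 * n i) B uhat j / lam)"
  define ustar where "ustar = uhat(m - 1 := um)"
  have ustar_unit: "\<forall>l<m. rvnorm (2 * n l) (ustar l) = 1"
    using feas rinner_complete_last(1)[OF m(1) lam_def lam_pos] m
    by (auto simp: ustar_def um_def less_Suc_eq)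
  have "rinner m (\<lambda>i. 2 * n i) B ustar = lam"
    using rinner_complete_last(2)[OF m(1) lam_def lam_pos] by (simp add: ustar_def um_def)
  then have "U_eigenpair m n A lam (\<lambda>i. to_cvec (n i) (ustar i))"
    using U_eigenpair_of_rinner_maximizer[OF B_def lam_pos ustar_unit] bound by blast
  moreover have "(\<lambda>i. to_cvec (n i) (if i = m - 1 then um else uhat i))
      = (\<lambda>i. to_cvec (n i) (ustar i))"
    by (auto simp: ustar_def)
  ultimately show ?thesis
    using U_eigenvalue_le_of_Re_cinner_bound[OF m(2) _ Re_bound]
    unfolding Let_def U_eigenvalue_def um_def by auto
qed

end
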